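(* There is an absolute constant $C>0$ such that the following holds. Let $Q$ be a $\pi$-periodic function in $L^2([0,\pi])$ with $Q(x)=\sum_{k\in2\mathbb{Z}}q(k)e^{ikx}=\sum_{m\ge1}\tilde q(m)\sqrt2\sin mx$, and put $q=(q(k))_{k\in2\mathbb{Z}}$, $\tilde q=(\tilde q(m))_{m\in\mathbb{N}}$. Then for every integer $n\ge3$: (i) if $bc=Per^+$ and $n$ is even, or $bc=Per^-$ and $n$ is odd, $$\|K_\lambda VK_\lambda\|_{HS}\le C\Big(\mathcal{E}_{\sqrt n}(q)+\frac{\|q\|}{\sqrt n}\Big)\quad\text{for all }\lambda\in H_n\setminus D_n;$$ (ii) if $bc=Dir$, $$\|K_\lambda VK_\lambda\|_{HS}\le C\Big(\mathcal{E}_{\sqrt n}(\tilde q)+\frac{\|\tilde q\|}{\sqrt n}\Big)\quad\text{for all }\lambda\in G_n\setminus D_n.$$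
   Context: Coefficients are taken w.r.t. the orthonormal bases $\{e^{ikx}\}_{k\in2\mathbb{Z}}$ and $\{\sqrt2\sin mx\}_{m\ge1}$ of $L^2([0,\pi])$ with inner product $\frac1\pi\int_0^\pi f\overline g$; $\|\cdot\|$ is the $\ell^2$ norm. Index sets: $\Gamma_{Per^+}=2\mathbb{Z}$, $\Gamma_{Per^-}=1+2\mathbb{Z}$, $\Gamma_{Dir}=\mathbb{N}$. The matrix $V=(V_{jm})_{j,m\in\Gamma_{bc}}$ is: for $bc=Per^\pm$, $V_{jm}=i(j-m)q(j-m)$; for $bc=Dir$, $V_{jm}=\frac1{\sqrt2}\big(|j-m|\tilde q(|j-m|)-(j+m)\tilde q(j+m)\big)$ with $\tilde q(0)=0$. For $\lambda\notin\{j^2:j\in\Gamma_{bc}\}$, $K_\lambda$ is the diagonal matrix with entries $(\lambda-j^2)^{-1/2}$, $j\in\Gamma_{bc}$, where $z^{1/2}=\sqrt r e^{i\varphi/2}$ for $z=re^{i\varphi}$, $0\le\varphi<2\pi$; thus $(K_\lambda VK_\lambda)_{jm}=V_{jm}(\lambda-j^2)^{-1/2}(\lambda-m^2)^{-1/2}$, and $\|A\|_{HS}=(\sum_{j,m}|A_{jm}|^2)^{1/2}$. Regions: $H_n=\{\lambda:(n-1)^2\le\mathrm{Re}\,\lambda\le(n+1)^2\}$, $G_n=\{\lambda:(n-1)n\le\mathrm{Re}\,\lambda\le n(n+1)\}$ ($n\ge2$), $D_n=\{\lambda:|\lambda-n^2|<n/4\}$. For a sequence $x$ indexed by a subset of $\mathbb{Z}$,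 $\mathcal{E}_m(x)=(\sum_{|j|\ge m}|x(j)|^2)^{1/2}$. *)

theory Defs
  imports "HOL-Analysis.Analysis"
begin

datatype bc = Per_plus | Per_minus | Dir

fun Gamma :: "bc \<Rightarrow> int set" where
  "Gamma Per_plus = {j. even j}"
| "Gamma Per_minus = {j. odd j}"
| "Gamma Dir = {j. j \<ge> 1}"

definition arg02 :: "complex \<Rightarrow> real" where
  "arg02 z = (if Arg z \<ge> 0 then Arg z else Arg z + 2 * pi)"

definition sqrt_br :: "complex \<Rightarrow> complex" where
  "sqrt_br z = complex_of_real (sqrt (cmod z)) * exp (\<i> * complex_of_real (arg02 z / 2))"

definition V_per :: "(int \<Rightarrow> complex) \<Rightarrow> int \<Rightarrow> int \<Rightarrow> complex" where
  "V_per q j m = \<i> * of_int (j - m) * q (j - m)"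

definition V_dir :: "(nat \<Rightarrow> complex) \<Rightarrow> int \<Rightarrow> int \<Rightarrow> complex" where
  "V_dir qt j m = (of_int \<bar>j - m\<bar> * qt (nat \<bar>j - m\<bar>) - of_int (j + m) * qt (nat (j + m)))
                   / complex_of_real (sqrt 2)"

definition KVK :: "(int \<Rightarrow> int \<Rightarrow> complex) \<Rightarrow> complex \<Rightarrow> int \<Rightarrow> int \<Rightarrow> complex" where
  "KVK V lam j m = V j m / (sqrt_br (lam - of_int (j^2)) * sqrt_br (lam - of_int (m^2)))"

text \<open>Hilbert-Schmidt norm of a matrix indexed by I x I (meaningful when summable).\<close>
definition hs_norm :: "(int \<Rightarrow> int \<Rightarrow> complex) \<Rightarrow> int set \<Rightarrow> real" where
  "hs_norm A I = sqrt (\<Sum>\<^sub>\<infinity>(j, m)\<in>I \<times> I. (cmod (A j m))^2)"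

definition hs_finite :: "(int \<Rightarrow> int \<Rightarrow> complex) \<Rightarrow> int set \<Rightarrow> bool" where
  "hs_finite A I \<longleftrightarrow> (\<lambda>(j, m). (cmod (A j m))^2) summable_on (I \<times> I)"

definition l2n :: "('a \<Rightarrow> complex) \<Rightarrow> 'a set \<Rightarrow> real" where
  "l2n x I = sqrt (\<Sum>\<^sub>\<infinity>j\<in>I. (cmod (x j))^2)"

definition tail_int :: "(int \<Rightarrow> complex) \<Rightarrow> int set \<Rightarrow> real \<Rightarrow> real" where
  "tail_int x I t = l2n x {j \<in> I. real_of_int \<bar>j\<bar> \<ge> t}"

definition tail_nat :: "(nat \<Rightarrow> complex) \<Rightarrow> nat set \<Rightarrow> real \<Rightarrow> real" where
  "tail_nat x I t = l2n x {j \<in> I. real j \<ge> t}"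

definition H_reg :: "nat \<Rightarrow> complex set" where
  "H_reg n = {lam. (real n - 1)^2 \<le> Re lam \<and> Re lam \<le> (real n + 1)^2}"

definition G_reg :: "nat \<Rightarrow> complex set" where
  "G_reg n = {lam. (real n - 1) * real n \<le> Re lam \<and> Re lam \<le> real n * (real n + 1)}"

definition D_reg :: "nat \<Rightarrow> complex set" where
  "D_reg n = {lam. cmod (lam - of_nat (n^2)) < real n / 4}"

end

theory Submission
  imports Defs
begin

text \<open>
  Put \<open>\<delta> j = |\<lambda> - j\<^sup>2|\<close> and \<open>d = ||j| - n|\<close>, so that the squared HS norm is
  \<open>\<Sum> |V j m|\<^sup>2 / (\<delta> j \<delta> m)\<close>. Off the disc \<open>D\<^sub>n\<close>, for \<open>j\<close> in the index set, the strip
  condition on \<open>Re \<lambda>\<close> gives \<open>\<delta> j \<ge> max 1 d \<cdot> (n + d) / 6\<close>; since at most four \<open>j\<close>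
  share a value of \<open>d\<close>, \<open>\<Sum> 1/\<delta> j = O(1)\<close> and \<open>\<Sum> 1/\<delta> j\<^sup>2 = O(1/n\<^sup>2)\<close>.
  Group the entries by \<open>k = j - m\<close> (for Dirichlet conditions also by \<open>k = j + m\<close>); on
  such a fibre \<open>j\<close> and \<open>m\<close> determine each other. If \<open>|k| < \<surd>n\<close>, AM-GM gives
  \<open>k\<^sup>2/(\<delta> j \<delta> m) \<le> k\<^sup>2 (1/\<delta> j\<^sup>2 + 1/\<delta> m\<^sup>2)/2\<close>, so the fibre sum is \<open>O(1/n)\<close>; otherwise
  \<open>k\<^sup>2 \<le> 2(j\<^sup>2 + m\<^sup>2) \<le> 2(\<delta> j + \<delta> m) + O(n\<^sup>2)\<close> makes it \<open>O(1)\<close>. Weighting fibre \<open>k\<close>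
  by \<open>|q(k)|\<^sup>2\<close> bounds the squared HS norm by \<open>O(\<parallel>q\<parallel>\<^sup>2/n + \<E>\<^sub>\<surd>\<^sub>n(q)\<^sup>2)\<close>.
\<close>

lemma cmod_sqrt_br [simp]: "cmod (sqrt_br z) = sqrt (cmod z)"
  unfolding sqrt_br_def by (simp add: norm_mult)

lemma norm_KVK_sq:
  "(cmod (KVK V lam j m))^2 =
     (cmod (V j m))^2 / (cmod (lam - of_int (j^2)) * cmod (lam - of_int (m^2)))"
  unfolding KVK_def by (simp add: norm_divide norm_mult power_divide power_mult_distrib)

lemma hs_finite_and_hs_norm_le:
  assumes "\<And>F. finite F \<Longrightarrow> F \<subseteq> I \<times> I \<Longrightarrow> (\<Sum>(j, m)\<in>F. (cmod (A j m))^2) \<le> B"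
  shows "hs_finite A I \<and> hs_norm A I \<le> sqrt B"
proof -
  let ?f = "\<lambda>(j, m). (cmod (A j m))^2"
  have nonneg: "0 \<le> ?f p" for p by (simp add: split_beta)
  have summable: "?f summable_on I \<times> I"
    using assms nonneg by (intro nonneg_bdd_above_summable_on) (auto simp: bdd_above_def)
  then have "infsum ?f (I \<times> I) \<le> B"
    using assms by (rule infsum_le_finite_sums)
  with summable show ?thesis
    unfolding hs_finite_def hs_norm_def by simp
qed

subsection \<open>Distances to the squares\<close>

definition level_gap :: "nat \<Rightarrow> int \<Rightarrow> nat" where
  "level_gap n j = nat \<bar>\<bar>j\<bar> - int n\<bar>"

lemma real_level_gap: "real (level_gap n j) = \<bar>real_of_int \<bar>j\<bar> - real n\<bar>"
  unfolding level_gap_def by simp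

definition telescoping_weight :: "nat \<Rightarrow> real" where
  "telescoping_weight d = 1 / (max 1 (real d) * (real d + 1))"

lemma telescoping_weight_nonneg: "0 \<le> telescoping_weight d"
  unfolding telescoping_weight_def by simp

lemma sum_telescoping_weight_atMost: "(\<Sum>d\<le>M. telescoping_weight d) = 2 - 1 / (real M + 1)"
proof (induction M)
  case 0
  then show ?case by (simp add: telescoping_weight_def)
next
  case (Suc M)
  have "telescoping_weight (Suc M) = 1 / (real M + 1) - 1 / (real M + 2)"
    unfolding telescoping_weight_def by (simp add: field_simps max_def)
  with Suc show ?case by (simp add: add.commute)
qed

lemma sum_telescoping_weight_le:
  assumes "finite D"
  shows "(\<Sum>d\<in>D. telescoping_weight d) \<le> 2"
proof -
  have "D \<subseteq> {..Max D}" using assms by auto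
  then have "(\<Sum>d\<in>D. telescoping_weight d) \<le> (\<Sum>d\<le>Max D. telescoping_weight d)"
    by (intro sum_mono2) (auto simp: telescoping_weight_nonneg)
  also have "\<dots> \<le> 2" by (simp add: sum_telescoping_weight_atMost)
  finally show ?thesis .
qed

lemma sum_telescoping_weight_level_gap_le:
  assumes "finite J"
  shows "(\<Sum>j\<in>J. telescoping_weight (level_gap n j)) \<le> 8"
proof -
  have card_fibre: "card {j\<in>J. level_gap n j = e} \<le> 4" for e
  proof -
    have "{j\<in>J. level_gap n j = e} \<subseteq> set [int n + int e, int n - int e, - int n - int e, int e - int n]"
      by (auto simp: level_gap_def)
    then have "card {j\<in>J. level_gap n j = e} \<le> card (set [int n + int e, int n - int e, - int n - int e, int e - int n])"
      by (intro card_mono) auto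
    also have "\<dots> \<le> 4"
      using card_length[of "[int n + int e, int n - int e, - int n - int e, int e - int n]"] by simp
    finally show ?thesis .
  qed
  have "(\<Sum>j\<in>J. telescoping_weight (level_gap n j))
      = (\<Sum>e\<in>level_gap n ` J. \<Sum>j\<in>{j\<in>J. level_gap n j = e}. telescoping_weight (level_gap n j))"
    using assms by (rule sum.image_gen)
  also have "\<dots> = (\<Sum>e\<in>level_gap n ` J. real (card {j\<in>J. level_gap n j = e}) * telescoping_weight e)"
    by (intro sum.cong refl) simp
  also have "\<dots> \<le> (\<Sum>e\<in>level_gap n ` J. 4 * telescoping_weight e)"
    using card_fibre by (intro sum_mono mult_right_mono telescoping_weight_nonneg) simp
  also have "\<dots> \<le> 8"
    using sum_telescoping_weight_le[of "level_gap n ` J"] assms by (simp add: sum_distrib_left[symmetric])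
  finally show ?thesis .
qed

lemma cmod_ge_level_gap:
  assumes "lam \<notin> D_reg n"
    and "\<bar>j\<bar> \<noteq> int n \<Longrightarrow>
      real (level_gap n j) * (real n + real (level_gap n j)) / 6 \<le> \<bar>Re lam - of_int (j^2)\<bar>"
  shows "max 1 (real (level_gap n j)) * (real n + real (level_gap n j)) / 6 \<le> cmod (lam - of_int (j^2))"
proof (cases "\<bar>j\<bar> = int n")
  case True
  then have "of_int (j^2) = (of_nat (n^2) :: complex)"
    by (metis of_int_of_nat_eq of_nat_power power2_abs)
  with assms(1) True show ?thesis by (simp add: D_reg_def level_gap_def)
next
  case False
  then have "1 \<le> level_gap n j" by (simp add: level_gap_def)
  moreover have "\<bar>Re lam - of_int (j^2)\<bar> \<le> cmod (lam - of_int (j^2))"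
    using abs_Re_le_cmod[of "lam - of_int (j^2)"] by simp
  ultimately show ?thesis using assms(2) False by simp
qed

lemma gap_above_H:
  fixes v N :: real assumes "2 \<le> v" "3 \<le> N"
  shows "v * (N + v) / 6 \<le> (N + v)^2 - (N + 1)^2"
proof -
  have "6 * ((N + v)^2 - (N + 1)^2) - v * (N + v) = 11 * (v * N) + 5 * (v * v) - 12 * N - 6"
    by (simp add: power2_eq_square algebra_simps)
  moreover have "2 * N \<le> v * N" "4 \<le> v * v"
    using assms mult_right_mono[of 2 v N] mult_mono[of 2 v 2 v] by auto
  ultimately have "v * (N + v) \<le> 6 * ((N + v)^2 - (N + 1)^2)" using assms by linarith
  then show ?thesis by simp
qed

lemma gap_below_H:
  fixes u N :: real assumes "2 \<le> u" "u \<le> N" "3 \<le> N"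
  shows "u * (N + u) / 6 \<le> (N - 1)^2 - (N - u)^2"
proof -
  have "6 * ((N - 1)^2 - (N - u)^2) - u * (N + u) = 11 * (u * N) - 7 * (u * u) - 12 * N + 6"
    by (simp add: power2_eq_square algebra_simps)
  moreover have "0 \<le> (u - 2) * (N - u)" using assms by simp
  moreover have "(u - 2) * (N - u) = u * N - u * u - 2 * N + 2 * u" by (simp add: algebra_simps)
  moreover have "3 * u \<le> u * N" using assms mult_left_mono[of 3 N u] by simp
  ultimately have "u * (N + u) \<le> 6 * ((N - 1)^2 - (N - u)^2)" using assms by linarith
  then show ?thesis by simp
qed

lemma gap_above_G:
  fixes v N :: real assumes "1 \<le> v" "0 \<le> N"
  shows "v * (N + v) / 6 \<le> (N + v)^2 - N * (N + 1)"
proof -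
  have "6 * ((N + v)^2 - N * (N + 1)) - v * (N + v) = 11 * (v * N) + 5 * (v * v) - 6 * N"
    by (simp add: power2_eq_square algebra_simps)
  moreover have "N \<le> v * N" "1 \<le> v * v"
    using assms mult_right_mono[of 1 v N] mult_mono[of 1 v 1 v] by auto
  ultimately have "v * (N + v) \<le> 6 * ((N + v)^2 - N * (N + 1))" using assms by linarith
  then show ?thesis by simp
qed

lemma gap_below_G:
  fixes u N :: real assumes "1 \<le> u" "u \<le> N - 1" "3 \<le> N"
  shows "u * (N + u) / 6 \<le> (N - 1) * N - (N - u)^2"
proof -
  have "6 * ((N - 1) * N - (N - u)^2) - u * (N + u) = 11 * (u * N) - 7 * (u * u) - 6 * N"
    by (simp add: power2_eq_square algebra_simps)
  moreover have "0 \<le> (u - 1) * (N - 1 - u)" using assms by simp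
  moreover have "(u - 1) * (N - 1 - u) = u * N - u * u - N + 1" by (simp add: algebra_simps)
  moreover have "N \<le> u * N" using assms mult_right_mono[of 1 u N] by simp
  ultimately have "u * (N + u) \<le> 6 * ((N - 1) * N - (N - u)^2)" using assms by linarith
  then show ?thesis by simp
qed

lemma level_gap_le_Re_dist_H:
  assumes "n \<ge> 3" "lam \<in> H_reg n" "even j = even n" "\<bar>j\<bar> \<noteq> int n"
  shows "real (level_gap n j) * (real n + real (level_gap n j)) / 6 \<le> \<bar>Re lam - of_int (j^2)\<bar>"
proof -
  have Re_lam: "(real n - 1)^2 \<le> Re lam" "Re lam \<le> (real n + 1)^2"
    using assms(2) by (auto simp: H_reg_def)
  define t where "t = \<bar>j\<bar>"
  have "even t = even (int n)" using assms(3) by (simp add: t_def)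
  then have "t \<noteq> int n + 1" "t \<noteq> int n - 1" by auto
  with assms(4) consider "\<bar>j\<bar> \<ge> int n + 2" | "\<bar>j\<bar> \<le> int n - 2" unfolding t_def by linarith
  then show ?thesis
  proof cases
    case 1
    define v where "v = real_of_int \<bar>j\<bar> - real n"
    have v: "v \<ge> 2" "real (level_gap n j) = v" "(real n + v)^2 = of_int (j^2)"
      using 1 by (auto simp: v_def real_level_gap)
    have "v * (real n + v) / 6 \<le> (real n + v)^2 - (real n + 1)^2"
      using gap_above_H v(1) assms(1) by simp
    also have "\<dots> \<le> \<bar>Re lam - of_int (j^2)\<bar>"
      using Re_lam v(3) abs_ge_minus_self[of "Re lam - of_int (j^2)"] by linarith
    finally show ?thesis using v(2) by simp
  next
    case 2
    define u where "u = real n - real_of_int \<bar>j\<bar>"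
    have u: "u \<ge> 2" "u \<le> real n" "real (level_gap n j) = u" "(real n - u)^2 = of_int (j^2)"
      using 2 by (auto simp: u_def real_level_gap)
    have "u * (real n + u) / 6 \<le> (real n - 1)^2 - (real n - u)^2"
      using gap_below_H u(1,2) assms(1) by simp
    also have "\<dots> \<le> \<bar>Re lam - of_int (j^2)\<bar>"
      using Re_lam u(4) abs_ge_self[of "Re lam - of_int (j^2)"] by linarith
    finally show ?thesis using u(3) by simp
  qed
qed

lemma level_gap_le_Re_dist_G:
  assumes "n \<ge> 3" "lam \<in> G_reg n" "j \<ge> 1" "\<bar>j\<bar> \<noteq> int n"
  shows "real (level_gap n j) * (real n + real (level_gap n j)) / 6 \<le> \<bar>Re lam - of_int (j^2)\<bar>"
proof -
  have Re_lam: "(real n - 1) * real n \<le> Re lam" "Re lam \<le> real n * (real n + 1)"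
    using assms(2) by (auto simp: G_reg_def)
  consider "\<bar>j\<bar> \<ge> int n + 1" | "\<bar>j\<bar> \<le> int n - 1" using assms(4) by linarith
  then show ?thesis
  proof cases
    case 1
    define v where "v = real_of_int \<bar>j\<bar> - real n"
    have v: "v \<ge> 1" "real (level_gap n j) = v" "(real n + v)^2 = of_int (j^2)"
      using 1 by (auto simp: v_def real_level_gap)
    have "v * (real n + v) / 6 \<le> (real n + v)^2 - real n * (real n + 1)"
      using gap_above_G v(1) by simp
    also have "\<dots> \<le> \<bar>Re lam - of_int (j^2)\<bar>"
      using Re_lam v(3) abs_ge_minus_self[of "Re lam - of_int (j^2)"] by linarith
    finally show ?thesis using v(2) by simp
  next
    case 2
    define u where "u = real n - real_of_int \<bar>j\<bar>"
    have u: "u \<ge> 1" "u \<le> real n - 1" "real (level_gap n j) = u" "(real n - u)^2 = of_int (j^2)"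
      using 2 assms(3) by (auto simp: u_def real_level_gap)
    have "u * (real n + u) / 6 \<le> (real n - 1) * real n - (real n - u)^2"
      using gap_below_G u(1,2) assms(1) by simp
    also have "\<dots> \<le> \<bar>Re lam - of_int (j^2)\<bar>"
      using Re_lam u(4) abs_ge_self[of "Re lam - of_int (j^2)"] by linarith
    finally show ?thesis using u(3) by simp
  qed
qed


subsection \<open>Fibre sums\<close>

lemma inverse_le_of_gap_bound:
  fixes A D N :: real
  assumes "max 1 D * (N + D) / 6 \<le> A" "0 \<le> D" "1 \<le> N"
  shows "0 < A" "1 / A \<le> 6 / (max 1 D * (D + 1))" "1 / A^2 \<le> 72 / N^2 / (max 1 D * (D + 1))"
proof -
  have L0: "0 < max 1 D * (N + D) / 6" using assms by (intro divide_pos_pos mult_pos_pos) auto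
  then show "0 < A" using assms(1) by linarith
  have "1 / A \<le> 1 / (max 1 D * (N + D) / 6)" using assms(1) L0 by (intro divide_left_mono) auto
  also have "\<dots> = 6 / (max 1 D * (N + D))" by simp
  also have "\<dots> \<le> 6 / (max 1 D * (D + 1))"
    using assms by (intro divide_left_mono mult_left_mono mult_pos_pos) auto
  finally show "1 / A \<le> 6 / (max 1 D * (D + 1))" .
  have "1 / A^2 \<le> 1 / (max 1 D * (N + D) / 6)^2"
    using assms(1) L0 by (intro divide_left_mono power_mono mult_pos_pos) auto
  also have "\<dots> = 36 / ((max 1 D)^2 * (N + D)^2)" by (simp add: power_divide power_mult_distrib)
  also have "\<dots> \<le> 36 / ((max 1 D)^2 * N^2)"
    using assms by (intro divide_left_mono mult_left_mono mult_pos_pos power_mono) auto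
  also have "\<dots> \<le> 72 / N^2 / (max 1 D * (D + 1))"
  proof -
    have "max 1 D * (D + 1) \<le> 2 * (max 1 D)^2" by (simp add: power2_eq_square max_def)
    then have "36 / ((max 1 D)^2 * N^2) \<le> 36 / (max 1 D * (D + 1) / 2 * N^2)"
      using assms by (intro divide_left_mono mult_right_mono mult_pos_pos) auto
    then show ?thesis by (simp add: field_simps)
  qed
  finally show "1 / A^2 \<le> 72 / N^2 / (max 1 D * (D + 1))" .
qed

lemma two_div_mult_le: fixes A B :: real assumes "0 < A" "0 < B"
  shows "2 / (A * B) \<le> 1 / A^2 + 1 / B^2"
proof -
  have "0 \<le> (1 / A - 1 / B)^2" by simp
  with assms show ?thesis by (simp add: power2_eq_square field_simps)
qed

definition tail_weight :: "real \<Rightarrow> real \<Rightarrow> real" where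
  "tail_weight N t = 1 / N + (if sqrt N \<le> t then 1 else 0)"

locale strip_off_disc =
  fixes n :: nat and lam :: complex and G :: "int set"
  assumes n_ge_3: "3 \<le> n"
    and Re_lam_le: "Re lam \<le> (real n + 1)^2"
    and cmod_ge: "\<And>j. j \<in> G \<Longrightarrow>
      max 1 (real (level_gap n j)) * (real n + real (level_gap n j)) / 6 \<le> cmod (lam - of_int (j^2))"
begin

definition \<delta> :: "int \<Rightarrow> real" where
  "\<delta> j = cmod (lam - of_int (j^2))"

lemma \<delta>_bounds:
  assumes "j \<in> G"
  shows "0 < \<delta> j" "1 / \<delta> j \<le> 6 * telescoping_weight (level_gap n j)"
    "1 / (\<delta> j)^2 \<le> 72 / (real n)^2 * telescoping_weight (level_gap n j)"
  using inverse_le_of_gap_bound[OF cmod_ge[OF assms]] n_ge_3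
  by (auto simp: \<delta>_def telescoping_weight_def)

lemma sq_le_\<delta>: "(real_of_int j)^2 \<le> \<delta> j + (real n + 1)^2"
proof -
  have "Re (lam - of_int (j^2)) = Re lam - (real_of_int j)^2" by simp
  then show ?thesis
    using abs_Re_le_cmod[of "lam - of_int (j^2)"] Re_lam_le by (simp add: \<delta>_def)
qed

lemma sum_inverse_\<delta>_le:
  assumes "finite J" "J \<subseteq> G"
  shows "(\<Sum>j\<in>J. 1 / \<delta> j) \<le> 48" "(\<Sum>j\<in>J. 1 / (\<delta> j)^2) \<le> 576 / (real n)^2"
proof -
  have "(\<Sum>j\<in>J. 1 / \<delta> j) \<le> (\<Sum>j\<in>J. 6 * telescoping_weight (level_gap n j))"
    using assms \<delta>_bounds by (intro sum_mono) auto
  also have "\<dots> \<le> 48"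
    using sum_telescoping_weight_level_gap_le[OF assms(1), of n] by (simp add: sum_distrib_left[symmetric])
  finally show "(\<Sum>j\<in>J. 1 / \<delta> j) \<le> 48" .
  have "(\<Sum>j\<in>J. 1 / (\<delta> j)^2) \<le> (\<Sum>j\<in>J. 72 / (real n)^2 * telescoping_weight (level_gap n j))"
    using assms \<delta>_bounds by (intro sum_mono) auto
  also have "\<dots> = 72 / (real n)^2 * (\<Sum>j\<in>J. telescoping_weight (level_gap n j))"
    by (rule sum_distrib_left[symmetric])
  also have "\<dots> \<le> 72 / (real n)^2 * 8"
    using sum_telescoping_weight_level_gap_le[OF assms(1), of n] by (intro mult_left_mono) auto
  finally show "(\<Sum>j\<in>J. 1 / (\<delta> j)^2) \<le> 576 / (real n)^2" by simp
qed

lemma sum_fibre_inverse_le: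
  assumes P: "finite P" "P \<subseteq> G \<times> G" "inj_on fst P" "inj_on snd P"
  shows "(\<Sum>(j, m)\<in>P. 1 / \<delta> j) \<le> 48" "(\<Sum>(j, m)\<in>P. 1 / \<delta> m) \<le> 48"
    "(\<Sum>(j, m)\<in>P. 1 / (\<delta> j)^2 + 1 / (\<delta> m)^2) \<le> 1152 / (real n)^2"
proof -
  have fst_P: "(\<Sum>(j, m)\<in>P. h j) = (\<Sum>j\<in>fst ` P. h j)"
    and snd_P: "(\<Sum>(j, m)\<in>P. h m) = (\<Sum>m\<in>snd ` P. h m)" for h :: "int \<Rightarrow> real"
    using sum.reindex[OF P(3), of h] sum.reindex[OF P(4), of h] by (simp_all add: comp_def split_beta)
  have images: "finite (fst ` P)" "fst ` P \<subseteq> G" "finite (snd ` P)" "snd ` P \<subseteq> G" using P by auto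
  show "(\<Sum>(j, m)\<in>P. 1 / \<delta> j) \<le> 48" "(\<Sum>(j, m)\<in>P. 1 / \<delta> m) \<le> 48"
    using sum_inverse_\<delta>_le(1)[OF images(1,2)] sum_inverse_\<delta>_le(1)[OF images(3,4)]
    by (simp_all only: fst_P snd_P)
  have "(\<Sum>(j, m)\<in>P. 1 / (\<delta> j)^2 + 1 / (\<delta> m)^2)
      = (\<Sum>(j, m)\<in>P. 1 / (\<delta> j)^2) + (\<Sum>(j, m)\<in>P. 1 / (\<delta> m)^2)"
    by (simp add: split_beta sum.distrib)
  then show "(\<Sum>(j, m)\<in>P. 1 / (\<delta> j)^2 + 1 / (\<delta> m)^2) \<le> 1152 / (real n)^2"
    using sum_inverse_\<delta>_le(2)[OF images(1,2)] sum_inverse_\<delta>_le(2)[OF images(3,4)]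
    by (simp only: fst_P snd_P)
qed

lemma sum_fibre_le_of_sq_le:
  assumes P: "finite P" "P \<subseteq> G \<times> G" "inj_on fst P" "inj_on snd P" and "c^2 \<le> real n"
  shows "(\<Sum>(j, m)\<in>P. c^2 / (\<delta> j * \<delta> m)) \<le> 576 / real n"
proof -
  have "(\<Sum>(j, m)\<in>P. c^2 / (\<delta> j * \<delta> m)) \<le> (\<Sum>(j, m)\<in>P. c^2 / 2 * (1 / (\<delta> j)^2 + 1 / (\<delta> m)^2))"
  proof (intro sum_mono, clarify)
    fix j m assume "(j, m) \<in> P"
    then have pos: "0 < \<delta> j" "0 < \<delta> m" using P(2) \<delta>_bounds(1) by auto
    have "c^2 / (\<delta> j * \<delta> m) = c^2 / 2 * (2 / (\<delta> j * \<delta> m))" by simp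
    also have "\<dots> \<le> c^2 / 2 * (1 / (\<delta> j)^2 + 1 / (\<delta> m)^2)"
      using two_div_mult_le[OF pos] by (intro mult_left_mono) auto
    finally show "c^2 / (\<delta> j * \<delta> m) \<le> c^2 / 2 * (1 / (\<delta> j)^2 + 1 / (\<delta> m)^2)" .
  qed
  also have "\<dots> = c^2 / 2 * (\<Sum>(j, m)\<in>P. 1 / (\<delta> j)^2 + 1 / (\<delta> m)^2)"
    unfolding sum_distrib_left by (simp add: split_beta)
  also have "\<dots> \<le> c^2 / 2 * (1152 / (real n)^2)"
    using sum_fibre_inverse_le(3)[OF P] by (intro mult_left_mono) auto
  also have "\<dots> = c^2 * (576 / (real n)^2)" by simp
  also have "\<dots> \<le> real n * (576 / (real n)^2)"
    using \<open>c^2 \<le> real n\<close> by (intro mult_right_mono) auto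
  also have "\<dots> = 576 / real n" by (simp add: power2_eq_square)
  finally show ?thesis .
qed

lemma sum_fibre_le_const:
  assumes P: "finite P" "P \<subseteq> G \<times> G" "inj_on fst P" "inj_on snd P"
    and c_sq_le: "\<And>j m. (j, m) \<in> P \<Longrightarrow> c^2 \<le> 2 * ((real_of_int j)^2 + (real_of_int m)^2)"
  shows "(\<Sum>(j, m)\<in>P. c^2 / (\<delta> j * \<delta> m)) \<le> 4288"
proof -
  define N where "N = (real n + 1)^2"
  have summand_le: "c^2 / (\<delta> j * \<delta> m) \<le> 2 / \<delta> j + 2 / \<delta> m + 2 * N * (1 / (\<delta> j)^2 + 1 / (\<delta> m)^2)"
    if "(j, m) \<in> P" for j m
  proof -
    have pos: "0 < \<delta> j" "0 < \<delta> m" using that P(2) \<delta>_bounds(1) by auto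
    have "c^2 \<le> 2 * (\<delta> j + \<delta> m + 2 * N)"
      using c_sq_le[OF that] sq_le_\<delta>[of j] sq_le_\<delta>[of m] by (simp add: N_def)
    then have "c^2 / (\<delta> j * \<delta> m) \<le> 2 * (\<delta> j + \<delta> m + 2 * N) / (\<delta> j * \<delta> m)"
      using pos by (intro divide_right_mono) auto
    also have "\<dots> = 2 / \<delta> j + 2 / \<delta> m + 2 * N * (2 / (\<delta> j * \<delta> m))"
      using pos by (simp add: field_simps)
    also have "\<dots> \<le> 2 / \<delta> j + 2 / \<delta> m + 2 * N * (1 / (\<delta> j)^2 + 1 / (\<delta> m)^2)"
      using two_div_mult_le[OF pos] by (intro add_left_mono mult_left_mono) (auto simp: N_def)
    finally show ?thesis .
  qed
  have "(\<Sum>(j, m)\<in>P. c^2 / (\<delta> j * \<delta> m))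
      \<le> (\<Sum>(j, m)\<in>P. 2 / \<delta> j + 2 / \<delta> m + 2 * N * (1 / (\<delta> j)^2 + 1 / (\<delta> m)^2))"
    using summand_le by (intro sum_mono) auto
  also have "\<dots> = 2 * (\<Sum>(j, m)\<in>P. 1 / \<delta> j) + 2 * (\<Sum>(j, m)\<in>P. 1 / \<delta> m)
      + 2 * N * (\<Sum>(j, m)\<in>P. 1 / (\<delta> j)^2 + 1 / (\<delta> m)^2)"
    unfolding sum_distrib_left by (simp add: split_beta sum.distrib del: distrib_left)
  also have "\<dots> \<le> 2 * 48 + 2 * 48 + 2 * N * (1152 / (real n)^2)"
    using sum_fibre_inverse_le[OF P] by (intro add_mono mult_left_mono) (auto simp: N_def)
  also have "\<dots> \<le> 4288"
  proof -
    have n: "3 \<le> real n" using n_ge_3 by simp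
    then have "N \<le> (4 / 3 * real n)^2" unfolding N_def by (intro power_mono) auto
    then have "N / (real n)^2 \<le> 16 / 9" using n by (simp add: field_simps power2_eq_square)
    moreover have "2 * N * (1152 / (real n)^2) = 2304 * (N / (real n)^2)" by simp
    ultimately show ?thesis by linarith
  qed
  finally show ?thesis .
qed

lemma sum_fibre_le_tail_weight:
  assumes P: "finite P" "P \<subseteq> G \<times> G" "inj_on fst P" "inj_on snd P"
    and k_sq_le: "\<And>j m. (j, m) \<in> P \<Longrightarrow> (real_of_int k)^2 \<le> 2 * ((real_of_int j)^2 + (real_of_int m)^2)"
  shows "(\<Sum>(j, m)\<in>P. (real_of_int k)^2 / (\<delta> j * \<delta> m)) \<le> 4288 * tail_weight n (real_of_int \<bar>k\<bar>)"
proof (cases "sqrt (real n) \<le> real_of_int \<bar>k\<bar>")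
  case True
  then show ?thesis
    using sum_fibre_le_const[OF P k_sq_le] by (simp add: tail_weight_def add_increasing)
next
  case False
  then have "(real_of_int \<bar>k\<bar>)^2 \<le> (sqrt (real n))^2" by (intro power_mono) auto
  then have "(\<Sum>(j, m)\<in>P. (real_of_int k)^2 / (\<delta> j * \<delta> m)) \<le> 576 / real n"
    by (intro sum_fibre_le_of_sq_le[OF P]) simp
  also have "\<dots> \<le> 4288 * tail_weight n (real_of_int \<bar>k\<bar>)"
    using False n_ge_3 by (simp add: tail_weight_def divide_right_mono)
  finally show ?thesis .
qed

lemma sum_convolution_le:
  fixes \<kappa> :: "int \<Rightarrow> int \<Rightarrow> int" and g :: "int \<Rightarrow> real"
  assumes F: "finite F" "F \<subseteq> G \<times> G"
    and inj: "\<And>j. inj (\<kappa> j)" "\<And>m. inj (\<lambda>j. \<kappa> j m)"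
    and \<kappa>_sq_le: "\<And>j m. (real_of_int (\<kappa> j m))^2 \<le> 2 * ((real_of_int j)^2 + (real_of_int m)^2)"
    and g_nonneg: "\<And>k. 0 \<le> g k"
  shows "(\<Sum>(j, m)\<in>F. g (\<kappa> j m) * (real_of_int (\<kappa> j m))^2 / (\<delta> j * \<delta> m))
    \<le> 4288 * (\<Sum>k\<in>case_prod \<kappa> ` F. g k * tail_weight n (real_of_int \<bar>k\<bar>))"
proof -
  let ?fibre = "\<lambda>k. {p \<in> F. case_prod \<kappa> p = k}"
  have "(\<Sum>(j, m)\<in>F. g (\<kappa> j m) * (real_of_int (\<kappa> j m))^2 / (\<delta> j * \<delta> m))
      = (\<Sum>k\<in>case_prod \<kappa> ` F. \<Sum>(j, m)\<in>?fibre k. g (\<kappa> j m) * (real_of_int (\<kappa> j m))^2 / (\<delta> j * \<delta> m))"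
    using F(1) by (rule sum.image_gen)
  also have "\<dots> = (\<Sum>k\<in>case_prod \<kappa> ` F. g k * (\<Sum>(j, m)\<in>?fibre k. (real_of_int k)^2 / (\<delta> j * \<delta> m)))"
  proof (rule sum.cong[OF refl])
    fix k
    have "(\<Sum>(j, m)\<in>?fibre k. g (\<kappa> j m) * (real_of_int (\<kappa> j m))^2 / (\<delta> j * \<delta> m))
        = (\<Sum>(j, m)\<in>?fibre k. g k * ((real_of_int k)^2 / (\<delta> j * \<delta> m)))"
      by (rule sum.cong) auto
    then show "(\<Sum>(j, m)\<in>?fibre k. g (\<kappa> j m) * (real_of_int (\<kappa> j m))^2 / (\<delta> j * \<delta> m))
        = g k * (\<Sum>(j, m)\<in>?fibre k. (real_of_int k)^2 / (\<delta> j * \<delta> m))"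
      by (simp add: sum_distrib_left case_prod_unfold)
  qed
  also have "\<dots> \<le> (\<Sum>k\<in>case_prod \<kappa> ` F. g k * (4288 * tail_weight n (real_of_int \<bar>k\<bar>)))"
  proof (rule sum_mono)
    fix k
    have "(\<Sum>(j, m)\<in>?fibre k. (real_of_int k)^2 / (\<delta> j * \<delta> m)) \<le> 4288 * tail_weight n (real_of_int \<bar>k\<bar>)"
    proof (rule sum_fibre_le_tail_weight)
      show "finite (?fibre k)" "?fibre k \<subseteq> G \<times> G" using F by auto
      show "inj_on fst (?fibre k)"
      proof (rule inj_onI)
        fix p p' assume "p \<in> ?fibre k" "p' \<in> ?fibre k" "fst p = fst p'"
        then show "p = p'" using inj(1)[of "fst p"] by (auto simp: split_beta prod_eq_iff inj_def)
      qed
      show "inj_on snd (?fibre k)"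
      proof (rule inj_onI)
        fix p p' assume "p \<in> ?fibre k" "p' \<in> ?fibre k" "snd p = snd p'"
        then show "p = p'" using inj(2)[of "snd p"] by (auto simp: split_beta prod_eq_iff inj_def)
      qed
      show "(real_of_int k)^2 \<le> 2 * ((real_of_int j)^2 + (real_of_int m)^2)" if "(j, m) \<in> ?fibre k" for j m
        using that \<kappa>_sq_le[of j m] by auto
    qed
    then show "g k * (\<Sum>(j, m)\<in>?fibre k. (real_of_int k)^2 / (\<delta> j * \<delta> m))
        \<le> g k * (4288 * tail_weight n (real_of_int \<bar>k\<bar>))"
      using g_nonneg by (rule mult_left_mono)
  qed
  also have "\<dots> = 4288 * (\<Sum>k\<in>case_prod \<kappa> ` F. g k * tail_weight n (real_of_int \<bar>k\<bar>))"
    by (simp add: sum_distrib_left mult.left_commute)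
  finally show ?thesis .
qed

end


subsection \<open>Tails of the potential\<close>

lemma sum_tail_weight_le:
  fixes x :: "'a \<Rightarrow> complex" and nrm :: "'a \<Rightarrow> real"
  assumes "0 < N" and summable: "(\<lambda>k. (cmod (x k))^2) summable_on I" and S: "finite S" "S \<subseteq> I"
  shows "(\<Sum>s\<in>S. (cmod (x s))^2 * tail_weight N (nrm s))
    \<le> (\<Sum>\<^sub>\<infinity>k\<in>I. (cmod (x k))^2) / N + (\<Sum>\<^sub>\<infinity>k\<in>{k\<in>I. sqrt N \<le> nrm k}. (cmod (x k))^2)"
proof -
  let ?g = "\<lambda>k. (cmod (x k))^2"
  have "?g s * tail_weight N (nrm s) = ?g s / N + (if sqrt N \<le> nrm s then ?g s else 0)" for s
    by (simp add: tail_weight_def distrib_left)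
  then have "(\<Sum>s\<in>S. ?g s * tail_weight N (nrm s)) = (\<Sum>s\<in>S. ?g s) / N + (\<Sum>s\<in>{s\<in>S. sqrt N \<le> nrm s}. ?g s)"
    using S(1) by (simp add: sum.distrib sum_divide_distrib sum.inter_filter)
  also have "\<dots> \<le> (\<Sum>\<^sub>\<infinity>k\<in>I. ?g k) / N + (\<Sum>\<^sub>\<infinity>k\<in>{k\<in>I. sqrt N \<le> nrm k}. ?g k)"
  proof (intro add_mono divide_right_mono)
    show "(\<Sum>s\<in>S. ?g s) \<le> (\<Sum>\<^sub>\<infinity>k\<in>I. ?g k)"
      using summable S by (intro finite_sum_le_infsum) auto
    have "?g summable_on {k\<in>I. sqrt N \<le> nrm k}"
      using summable by (rule summable_on_subset_banach) auto
    then show "(\<Sum>s\<in>{s\<in>S. sqrt N \<le> nrm s}. ?g s) \<le> (\<Sum>\<^sub>\<infinity>k\<in>{k\<in>I. sqrt N \<le> nrm k}. ?g k)"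
      using S by (intro finite_sum_le_infsum) auto
  qed (use \<open>0 < N\<close> in auto)
  finally show ?thesis .
qed

definition sine_coeff_sq :: "(nat \<Rightarrow> complex) \<Rightarrow> int \<Rightarrow> real" where
  "sine_coeff_sq qt k = (if k = 0 then 0 else (cmod (qt (nat \<bar>k\<bar>)))^2)"

lemma sum_sine_coeff_sq_tail_weight_le:
  assumes "0 < N" and summable: "(\<lambda>m. (cmod (qt m))^2) summable_on {m. m \<ge> 1}" and "finite K"
  shows "(\<Sum>k\<in>K. sine_coeff_sq qt k * tail_weight N (real_of_int \<bar>k\<bar>))
    \<le> 2 * ((\<Sum>\<^sub>\<infinity>m\<in>{m. m \<ge> 1}. (cmod (qt m))^2) / N
           + (\<Sum>\<^sub>\<infinity>m\<in>{m\<in>{m. m \<ge> 1}. sqrt N \<le> real m}. (cmod (qt m))^2))"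
    (is "_ \<le> 2 * ?B")
proof -
  let ?h = "\<lambda>k. sine_coeff_sq qt k * tail_weight N (real_of_int \<bar>k\<bar>)"
  have half: "sum ?h K' \<le> ?B" if "K' \<subseteq> K" "0 \<notin> K'" "inj_on (\<lambda>k. nat \<bar>k\<bar>) K'" for K'
  proof -
    have "sum ?h K' = (\<Sum>k\<in>K'. (cmod (qt (nat \<bar>k\<bar>)))^2 * tail_weight N (real (nat \<bar>k\<bar>)))"
      using that(2) by (intro sum.cong refl) (auto simp: sine_coeff_sq_def)
    also have "\<dots> = (\<Sum>s\<in>(\<lambda>k. nat \<bar>k\<bar>) ` K'. (cmod (qt s))^2 * tail_weight N (real s))"
      by (simp only: sum.reindex[OF that(3)] comp_def)
    also have "\<dots> \<le> ?B"
      using that \<open>finite K\<close> by (intro sum_tail_weight_le[OF \<open>0 < N\<close> summable]) (auto intro: finite_subset simp: Suc_le_eq)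
    finally show ?thesis .
  qed
  have "sum ?h K = sum ?h {k\<in>K. 0 < k} + sum ?h {k\<in>K. k < 0}"
  proof -
    have "sum ?h K = sum ?h ({k\<in>K. 0 < k} \<union> {k\<in>K. k < 0})"
      by (intro sum.mono_neutral_right) (auto simp: \<open>finite K\<close> sine_coeff_sq_def)
    also have "\<dots> = sum ?h {k\<in>K. 0 < k} + sum ?h {k\<in>K. k < 0}"
      using \<open>finite K\<close> by (intro sum.union_disjoint) auto
    finally show ?thesis .
  qed
  also have "\<dots> \<le> ?B + ?B"
    by (intro add_mono half) (auto simp: inj_on_def)
  finally show ?thesis by simp
qed

subsection \<open>The two boundary conditions\<close>

lemma sqrt_tail_bound:
  fixes Q E N :: real
  assumes "0 \<le> Q" "0 \<le> E" "0 < N"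
  shows "sqrt (17152 * (Q / N + E)) \<le> 131 * (sqrt E + sqrt Q / sqrt N)"
proof -
  have "sqrt (17152 * (Q / N + E)) = sqrt 17152 * sqrt (E + Q / N)"
    by (subst real_sqrt_mult[symmetric]) (simp add: add.commute)
  also have "\<dots> \<le> 131 * (sqrt E + sqrt Q / sqrt N)"
  proof (rule mult_mono)
    show "sqrt 17152 \<le> 131" by (rule real_le_lsqrt) auto
    have "sqrt (E + Q / N) \<le> sqrt E + sqrt (Q / N)" using assms by (intro sqrt_add_le_add_sqrt) auto
    then show "sqrt (E + Q / N) \<le> sqrt E + sqrt Q / sqrt N" by (simp add: real_sqrt_divide)
  qed (use assms in auto)
  finally show ?thesis .
qed

lemma sq_sub_add_le: fixes x y :: real shows "(x - y)^2 \<le> 2 * (x^2 + y^2)" "(x + y)^2 \<le> 2 * (x^2 + y^2)"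
proof -
  have "0 \<le> (x + y)^2" "0 \<le> (x - y)^2" by simp_all
  then show "(x - y)^2 \<le> 2 * (x^2 + y^2)" "(x + y)^2 \<le> 2 * (x^2 + y^2)"
    by (simp_all add: power2_eq_square algebra_simps)
qed

lemma hs_KVK_per_le:
  assumes summable: "(\<lambda>k. (cmod (q k))^2) summable_on {k. even k}" and "3 \<le> n"
    and bc: "(b = Per_plus \<and> even n) \<or> (b = Per_minus \<and> odd n)"
    and lam: "lam \<in> H_reg n - D_reg n"
  shows "hs_finite (KVK (V_per q) lam) (Gamma b) \<and>
    hs_norm (KVK (V_per q) lam) (Gamma b)
      \<le> 131 * (tail_int q {k. even k} (sqrt (real n)) + l2n q {k. even k} / sqrt (real n))"
proof -
  have parity: "even j = even n" if "j \<in> Gamma b" for j using that bc by auto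
  interpret strip_off_disc n lam "Gamma b"
  proof
    show "Re lam \<le> (real n + 1)^2" using lam by (simp add: H_reg_def)
    show "max 1 (real (level_gap n j)) * (real n + real (level_gap n j)) / 6 \<le> cmod (lam - of_int (j^2))"
      if "j \<in> Gamma b" for j
      using lam level_gap_le_Re_dist_H[OF \<open>3 \<le> n\<close> _ parity[OF that]] by (intro cmod_ge_level_gap) auto
  qed (fact \<open>3 \<le> n\<close>)
  define Q where "Q = (\<Sum>\<^sub>\<infinity>k\<in>{k::int. even k}. (cmod (q k))^2)"
  define E where "E = (\<Sum>\<^sub>\<infinity>k\<in>{k\<in>{k::int. even k}. sqrt (real n) \<le> real_of_int \<bar>k\<bar>}. (cmod (q k))^2)"
  have "(\<Sum>(j, m)\<in>F. (cmod (KVK (V_per q) lam j m))^2) \<le> 17152 * (Q / real n + E)"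
    if F: "finite F" "F \<subseteq> Gamma b \<times> Gamma b" for F
  proof -
    have "(\<Sum>(j, m)\<in>F. (cmod (KVK (V_per q) lam j m))^2)
        = (\<Sum>(j, m)\<in>F. (cmod (q (j - m)))^2 * (real_of_int (j - m))^2 / (\<delta> j * \<delta> m))"
      by (intro sum.cong refl)
        (auto simp: norm_KVK_sq V_per_def \<delta>_def norm_mult power_mult_distrib norm_of_int simp del: of_int_diff)
    also have "\<dots> \<le> 4288 * (\<Sum>k\<in>(\<lambda>(j, m). j - m) ` F. (cmod (q k))^2 * tail_weight n (real_of_int \<bar>k\<bar>))"
      using F sq_sub_add_le(1) by (intro sum_convolution_le) (auto simp: inj_def)
    also have "\<dots> \<le> 4288 * (Q / real n + E)"
      unfolding Q_def E_def using F parity \<open>3 \<le> n\<close>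
      by (intro mult_left_mono sum_tail_weight_le[OF _ summable]) auto
    also have "\<dots> \<le> 17152 * (Q / real n + E)"
      unfolding Q_def E_def by (intro mult_right_mono add_nonneg_nonneg divide_nonneg_nonneg infsum_nonneg) auto
    finally show ?thesis .
  qed
  then have "hs_finite (KVK (V_per q) lam) (Gamma b) \<and>
      hs_norm (KVK (V_per q) lam) (Gamma b) \<le> sqrt (17152 * (Q / real n + E))"
    by (rule hs_finite_and_hs_norm_le)
  moreover have "sqrt (17152 * (Q / real n + E)) \<le> 131 * (sqrt E + sqrt Q / sqrt (real n))"
    using \<open>3 \<le> n\<close> unfolding Q_def E_def by (intro sqrt_tail_bound infsum_nonneg) auto
  ultimately show ?thesis by (simp add: tail_int_def l2n_def Q_def E_def)
qed

lemma norm_V_dir_sq_le: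
  assumes "0 \<le> j + m"
  shows "(cmod (V_dir qt j m))^2
    \<le> (real_of_int (j - m))^2 * sine_coeff_sq qt (j - m) + (real_of_int (j + m))^2 * sine_coeff_sq qt (j + m)"
proof -
  define X where "X = (of_int \<bar>j - m\<bar> * qt (nat \<bar>j - m\<bar>) :: complex)"
  define Y where "Y = (of_int (j + m) * qt (nat (j + m)) :: complex)"
  have "(cmod X)^2 = (real_of_int (j - m))^2 * sine_coeff_sq qt (j - m)"
    by (simp add: X_def sine_coeff_sq_def norm_mult norm_of_int power_mult_distrib del: of_int_diff)
  moreover have "(cmod Y)^2 = (real_of_int (j + m))^2 * sine_coeff_sq qt (j + m)"
    using assms by (simp add: Y_def sine_coeff_sq_def norm_mult norm_of_int power_mult_distrib del: of_int_add)
  moreover have "(cmod (V_dir qt j m))^2 \<le> (cmod X)^2 + (cmod Y)^2"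
  proof -
    have "(cmod (V_dir qt j m))^2 = (cmod (X - Y))^2 / 2"
      by (simp add: V_dir_def X_def Y_def norm_divide power_divide)
    also have "\<dots> \<le> (cmod X + cmod Y)^2 / 2"
      by (intro divide_right_mono power_mono norm_triangle_ineq4) auto
    also have "\<dots> \<le> (cmod X)^2 + (cmod Y)^2"
      using sq_sub_add_le(2)[of "cmod X" "cmod Y"] by simp
    finally show ?thesis .
  qed
  ultimately show ?thesis by simp
qed

lemma norm_KVK_dir_sq_le:
  assumes "0 \<le> j + m"
  shows "(cmod (KVK (V_dir qt) lam j m))^2
    \<le> sine_coeff_sq qt (j - m) * (real_of_int (j - m))^2
        / (cmod (lam - of_int (j^2)) * cmod (lam - of_int (m^2)))
      + sine_coeff_sq qt (j + m) * (real_of_int (j + m))^2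
        / (cmod (lam - of_int (j^2)) * cmod (lam - of_int (m^2)))"
proof -
  have "(cmod (KVK (V_dir qt) lam j m))^2
      = (cmod (V_dir qt j m))^2 / (cmod (lam - of_int (j^2)) * cmod (lam - of_int (m^2)))"
    by (rule norm_KVK_sq)
  also have "\<dots> \<le> ((real_of_int (j - m))^2 * sine_coeff_sq qt (j - m)
      + (real_of_int (j + m))^2 * sine_coeff_sq qt (j + m))
      / (cmod (lam - of_int (j^2)) * cmod (lam - of_int (m^2)))"
    using norm_V_dir_sq_le[OF assms] by (intro divide_right_mono) auto
  finally show ?thesis by (simp add: add_divide_distrib mult.commute)
qed

lemma hs_KVK_dir_le:
  assumes summable: "(\<lambda>m. (cmod (qt m))^2) summable_on {m. m \<ge> 1}" and "3 \<le> n"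
    and lam: "lam \<in> G_reg n - D_reg n"
  shows "hs_finite (KVK (V_dir qt) lam) (Gamma Dir) \<and>
    hs_norm (KVK (V_dir qt) lam) (Gamma Dir)
      \<le> 131 * (tail_nat qt {m. m \<ge> 1} (sqrt (real n)) + l2n qt {m. m \<ge> 1} / sqrt (real n))"
proof -
  interpret strip_off_disc n lam "Gamma Dir"
  proof
    have "real n * (real n + 1) \<le> (real n + 1)^2" by (simp add: power2_eq_square)
    then show "Re lam \<le> (real n + 1)^2" using lam by (simp add: G_reg_def)
    show "max 1 (real (level_gap n j)) * (real n + real (level_gap n j)) / 6 \<le> cmod (lam - of_int (j^2))"
      if "j \<in> Gamma Dir" for j
      using that lam level_gap_le_Re_dist_G[OF \<open>3 \<le> n\<close>] by (intro cmod_ge_level_gap) auto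
  qed (fact \<open>3 \<le> n\<close>)
  define Q where "Q = (\<Sum>\<^sub>\<infinity>m\<in>{m::nat. m \<ge> 1}. (cmod (qt m))^2)"
  define E where "E = (\<Sum>\<^sub>\<infinity>m\<in>{m\<in>{m::nat. m \<ge> 1}. sqrt (real n) \<le> real m}. (cmod (qt m))^2)"
  have "(\<Sum>(j, m)\<in>F. (cmod (KVK (V_dir qt) lam j m))^2) \<le> 17152 * (Q / real n + E)"
    if F: "finite F" "F \<subseteq> Gamma Dir \<times> Gamma Dir" for F
  proof -
    let ?conv = "\<lambda>\<kappa>. \<Sum>(j, m)\<in>F. sine_coeff_sq qt (\<kappa> j m) * (real_of_int (\<kappa> j m))^2 / (\<delta> j * \<delta> m)"
    let ?tail = "\<lambda>\<kappa>. \<Sum>k\<in>case_prod \<kappa> ` F. sine_coeff_sq qt k * tail_weight n (real_of_int \<bar>k\<bar>)"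
    have "(\<Sum>(j, m)\<in>F. (cmod (KVK (V_dir qt) lam j m))^2) \<le> ?conv (-) + ?conv (+)"
      unfolding sum.distrib[symmetric]
    proof (intro sum_mono, clarify)
      fix j m assume "(j, m) \<in> F"
      then have "0 \<le> j + m" using F by auto
      then show "(cmod (KVK (V_dir qt) lam j m))^2
          \<le> sine_coeff_sq qt (j - m) * (real_of_int (j - m))^2 / (\<delta> j * \<delta> m)
            + sine_coeff_sq qt (j + m) * (real_of_int (j + m))^2 / (\<delta> j * \<delta> m)"
        unfolding \<delta>_def by (rule norm_KVK_dir_sq_le)
    qed
    also have "\<dots> \<le> 4288 * ?tail (-) + 4288 * ?tail (+)"
      using F sq_sub_add_le by (intro add_mono sum_convolution_le) (auto simp: inj_def sine_coeff_sq_def)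
    also have "\<dots> \<le> 4288 * (2 * (Q / real n + E)) + 4288 * (2 * (Q / real n + E))"
      unfolding Q_def E_def using F \<open>3 \<le> n\<close>
      by (intro add_mono mult_left_mono sum_sine_coeff_sq_tail_weight_le[OF _ summable]) auto
    finally show ?thesis by simp
  qed
  then have "hs_finite (KVK (V_dir qt) lam) (Gamma Dir) \<and>
      hs_norm (KVK (V_dir qt) lam) (Gamma Dir) \<le> sqrt (17152 * (Q / real n + E))"
    by (rule hs_finite_and_hs_norm_le)
  moreover have "sqrt (17152 * (Q / real n + E)) \<le> 131 * (sqrt E + sqrt Q / sqrt (real n))"
    using \<open>3 \<le> n\<close> unfolding Q_def E_def by (intro sqrt_tail_bound infsum_nonneg) auto
  ultimately show ?thesis by (simp add: tail_nat_def l2n_def Q_def E_def)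
qed

theorem lemma19:
  "\<exists>C > 0.
     (\<forall>(q :: int \<Rightarrow> complex) (b :: bc) (n :: nat) lam.
        (\<lambda>k. (cmod (q k))^2) summable_on {k. even k} \<longrightarrow>
        n \<ge> 3 \<longrightarrow>
        ((b = Per_plus \<and> even n) \<or> (b = Per_minus \<and> odd n)) \<longrightarrow>
        lam \<in> H_reg n - D_reg n \<longrightarrow>
          hs_finite (KVK (V_per q) lam) (Gamma b) \<and>
          hs_norm (KVK (V_per q) lam) (Gamma b)
            \<le> C * (tail_int q {k. even k} (sqrt (real n)) + l2n q {k. even k} / sqrt (real n)))
   \<and> (\<forall>(qt :: nat \<Rightarrow> complex) (n :: nat) lam.
        (\<lambda>m. (cmod (qt m))^2) summable_on {m. m \<ge> 1} \<longrightarrow>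
        n \<ge> 3 \<longrightarrow>
        lam \<in> G_reg n - D_reg n \<longrightarrow>
          hs_finite (KVK (V_dir qt) lam) (Gamma Dir) \<and>
          hs_norm (KVK (V_dir qt) lam) (Gamma Dir)
            \<le> C * (tail_nat qt {m. m \<ge> 1} (sqrt (real n)) + l2n qt {m. m \<ge> 1} / sqrt (real n)))"
  using hs_KVK_per_le hs_KVK_dir_le by (intro exI[of _ 131]) auto

end
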